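(* Let $(E,X,Y)$, with $X=(X_1,\dots,X_d)$, be generated by a structural causal model whose graph $\mathcal{G}$ is a DAG, whose distribution is faithful (and Markov) with respect to $\mathcal{G}$, and in which $E$ is exogenous (i.e. $E$ has no parents). If $E\notin\mathrm{PA}_Y$, then $$S_{\mathrm{ICP}}=\mathrm{PA}_Y\cap\big(\mathrm{CH}_E\cup\mathrm{PA}(\mathrm{AN}_Y\cap\mathrm{CH}_E)\big).$$
   Context: In the DAG $\mathcal{G}$, $\mathrm{PA}_v$, $\mathrm{CH}_v$, $\mathrm{AN}_v$ denote the parents, children and ancestors of a node $v$ (not containing $v$), and for a set $A$ of nodes $\mathrm{PA}(A)=\bigcup_{v\in A}\mathrm{PA}_v$. Nodes $j\in[d]=\{1,\dots,d\}$ are identified with the variables $X_j$. A set $S\subseteq[d]$ is invariant if $Y\perp\!\!\!\perp E\mid X_S$, where $X_S=(X_j)_{j\in S}$; $\mathcal{I}$ is the collection of invariant sets, and $S_{\mathrm{ICP}}=\bigcap_{S\in\mathcal{I}}S$ (with $S_{\mathrm{ICP}}=\emptyset$ if $\mathcal{I}=\emptyset$). *)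

theory Defs
  imports Main
begin

text \<open>Directed graphs are edge relations; (u,v) in G means u -> v.\<close>

definition parents :: "('v \<times> 'v) set \<Rightarrow> 'v \<Rightarrow> 'v set" where
  "parents G v = {u. (u, v) \<in> G}"

definition children :: "('v \<times> 'v) set \<Rightarrow> 'v \<Rightarrow> 'v set" where
  "children G v = {w. (v, w) \<in> G}"

definition ancestors :: "('v \<times> 'v) set \<Rightarrow> 'v \<Rightarrow> 'v set" where
  "ancestors G v = {u. (u, v) \<in> G\<^sup>+}"

definition descendants :: "('v \<times> 'v) set \<Rightarrow> 'v \<Rightarrow> 'v set" where
  "descendants G v = {w. (v, w) \<in> G\<^sup>+}"

definition parents_set :: "('v \<times> 'v) set \<Rightarrow> 'v set \<Rightarrow> 'v set" where
  "parents_set G A = (\<Union>v\<in>A. parents G v)"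

definition adjacent :: "('v \<times> 'v) set \<Rightarrow> 'v \<Rightarrow> 'v \<Rightarrow> bool" where
  "adjacent G u v \<longleftrightarrow> (u, v) \<in> G \<or> (v, u) \<in> G"

definition is_path :: "('v \<times> 'v) set \<Rightarrow> 'v list \<Rightarrow> bool" where
  "is_path G p \<longleftrightarrow> p \<noteq> [] \<and> distinct p \<and>
     (\<forall>i. Suc i < length p \<longrightarrow> adjacent G (p ! i) (p ! Suc i))"

definition collider :: "('v \<times> 'v) set \<Rightarrow> 'v list \<Rightarrow> nat \<Rightarrow> bool" where
  "collider G p i \<longleftrightarrow> (p ! (i - 1), p ! i) \<in> G \<and> (p ! Suc i, p ! i) \<in> G"

definition d_connecting :: "('v \<times> 'v) set \<Rightarrow> 'v set \<Rightarrow> 'v list \<Rightarrow> bool" where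
  "d_connecting G Z p \<longleftrightarrow> is_path G p \<and>
     (\<forall>i. 0 < i \<and> Suc i < length p \<longrightarrow>
        (if collider G p i
         then (p ! i \<in> Z \<or> descendants G (p ! i) \<inter> Z \<noteq> {})
         else p ! i \<notin> Z))"

definition d_separated :: "('v \<times> 'v) set \<Rightarrow> 'v set \<Rightarrow> 'v set \<Rightarrow> 'v set \<Rightarrow> bool" where
  "d_separated G A B Z \<longleftrightarrow>
     \<not> (\<exists>p. d_connecting G Z p \<and> hd p \<in> A \<and> last p \<in> B)"

text \<open>The conditional independence relation of the distribution of (E,X,Y)
  is modelled abstractly: ci A B Z means X_A independent of X_B given X_Z.\<close>
definition markov_faithful ::
  "('v \<times> 'v) set \<Rightarrow> 'v set \<Rightarrow> ('v set \<Rightarrow> 'v set \<Rightarrow> 'v set \<Rightarrow> bool) \<Rightarrow> bool" where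
  "markov_faithful G V ci \<longleftrightarrow>
     (\<forall>A B Z. A \<subseteq> V \<and> B \<subseteq> V \<and> Z \<subseteq> V \<and> A \<inter> B = {} \<and> A \<inter> Z = {} \<and> B \<inter> Z = {}
        \<longrightarrow> (ci A B Z \<longleftrightarrow> d_separated G A B Z))"

text \<open>Invariant sets S \<subseteq> [d] (identified with the predictor nodes Xs): Y indep E given X_S.\<close>
definition invariant_sets ::
  "('v set \<Rightarrow> 'v set \<Rightarrow> 'v set \<Rightarrow> bool) \<Rightarrow> 'v \<Rightarrow> 'v \<Rightarrow> 'v set \<Rightarrow> 'v set set" where
  "invariant_sets ci E Y Xs = {S. S \<subseteq> Xs \<and> ci {Y} {E} S}"

definition S_ICP ::
  "('v set \<Rightarrow> 'v set \<Rightarrow> 'v set \<Rightarrow> bool) \<Rightarrow> 'v \<Rightarrow> 'v \<Rightarrow> 'v set \<Rightarrow> 'v set" where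
  "S_ICP ci E Y Xs = (if invariant_sets ci E Y Xs = {} then {} else \<Inter> (invariant_sets ci E Y Xs))"

end

(*
  By faithfulness, S is invariant iff it d-separates E from Y. Two invariant sets bound S_ICP
  from above: PA_Y, which d-separates Y from every node that is neither a parent nor a
  descendant of Y (E is neither), and S0 = A \<union> (PA(A) - {E}) with A = AN_Y \<inter> CH_E. A path
  from E given S0 starts with an edge E -> a. If a \<in> A, then a \<in> S0 must be an open collider,
  and its other neighbour is a parent of a, hence in S0 and a blocked non-collider. Otherwise
  the path can never turn, since an open collider would need a descendant in S0 \<subseteq> AN_Y; so it
  is directed and a would be an ancestor of Y. PA_Y \<inter> S0 is exactly the claimed set.
  Conversely, a parent x of Y outside an invariant S yields a d-connecting path: E -> x -> Y if
  x \<in> CH_E, and if x -> k with k \<in> A, either E -> k <- x -> Y (when k or a descendant of k lies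
  in S) or a directed path from E through k to Y avoiding S.
*)

theory Submission
  imports Defs
begin

lemma acyclic_trancl_imp_not_rtrancl:
  assumes "acyclic G" "(a, b) \<in> G\<^sup>+"
  shows "(b, a) \<notin> G\<^sup>*"
  using assms trancl_rtrancl_trancl by (fastforce simp: acyclic_def)

lemma nth_Suc_less_if_not_last:
  assumes "i < length xs" "xs ! i \<noteq> last xs"
  shows "Suc i < length xs"
  using assms by (metis Suc_lessI diff_Suc_1 last_conv_nth list.size(3) not_less0)

lemma d_connectingD:
  assumes "d_connecting G Z p"
  shows "p \<noteq> []" and "distinct p"
    and "Suc i < length p \<Longrightarrow> adjacent G (p ! i) (p ! Suc i)"
    and "0 < i \<Longrightarrow> Suc i < length p \<Longrightarrow> collider G p i \<Longrightarrow>
           p ! i \<in> Z \<or> descendants G (p ! i) \<inter> Z \<noteq> {}"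
    and "0 < i \<Longrightarrow> Suc i < length p \<Longrightarrow> \<not> collider G p i \<Longrightarrow> p ! i \<notin> Z"
  using assms by (auto simp: d_connecting_def is_path_def)

lemma d_connecting_rev:
  assumes "d_connecting G Z p"
  shows "d_connecting G Z (rev p)"
proof -
  let ?n = "length p"
  have "is_path G (rev p)"
    unfolding is_path_def
  proof (intro conjI allI impI)
    fix i assume i: "Suc i < length (rev p)"
    have "adjacent G (p ! (?n - Suc (Suc i))) (p ! Suc (?n - Suc (Suc i)))"
      using d_connectingD(3)[OF assms] i by simp
    moreover have "Suc (?n - Suc (Suc i)) = ?n - Suc i" using i by simp
    ultimately show "adjacent G (rev p ! i) (rev p ! Suc i)"
      using i by (auto simp: rev_nth adjacent_def)
  qed (use d_connectingD(1,2)[OF assms] in auto)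
  moreover have "if collider G (rev p) i
      then rev p ! i \<in> Z \<or> descendants G (rev p ! i) \<inter> Z \<noteq> {} else rev p ! i \<notin> Z"
    if i: "0 < i" "Suc i < length (rev p)" for i
  proof -
    define j where "j = ?n - Suc i"
    have j: "0 < j" "Suc j < ?n" using i by (auto simp: j_def)
    have nodes: "rev p ! i = p ! j" "rev p ! (i - 1) = p ! Suc j" "rev p ! Suc i = p ! (j - 1)"
      using i by (auto simp: rev_nth j_def Suc_diff_Suc)
    have "collider G (rev p) i = collider G p j"
      unfolding collider_def nodes by auto
    then show ?thesis
      using d_connectingD(4,5)[OF assms j] nodes by auto
  qed
  ultimately show ?thesis
    unfolding d_connecting_def by auto
qed

lemma d_separated_sym: "d_separated G A B Z \<longleftrightarrow> d_separated G B A Z"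
  unfolding d_separated_def
  by (metis d_connecting_rev d_connectingD(1) hd_rev last_rev rev_rev_ident)

definition directed_path :: "('v \<times> 'v) set \<Rightarrow> 'v list \<Rightarrow> bool" where
  "directed_path G p \<longleftrightarrow> p \<noteq> [] \<and> (\<forall>i. Suc i < length p \<longrightarrow> (p ! i, p ! Suc i) \<in> G)"

lemma directed_path_singleton [simp]: "directed_path G [a]"
  by (simp add: directed_path_def)

lemma directed_path_Cons:
  assumes "p \<noteq> []"
  shows "directed_path G (a # p) \<longleftrightarrow> (a, hd p) \<in> G \<and> directed_path G p"
  using assms by (auto simp: directed_path_def hd_conv_nth nth_Cons split: nat.splits)

lemma directed_path_nth_trancl:
  assumes "directed_path G p" "i < j" "j < length p"
  shows "(p ! i, p ! j) \<in> G\<^sup>+"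
  using assms(2,3)
proof (induction j)
  case (Suc j)
  have "(p ! j, p ! Suc j) \<in> G"
    using assms(1) Suc.prems by (simp add: directed_path_def)
  then show ?case
    using Suc by (cases "i = j") auto
qed simp

lemma trancl_directed_path:
  assumes "(a, b) \<in> G\<^sup>+"
  shows "\<exists>p. directed_path G p \<and> hd p = a \<and> last p = b"
  using assms
proof (induction rule: converse_trancl_induct)
  case (base a)
  then show ?case
    by (intro exI[of _ "[a, b]"]) (simp add: directed_path_Cons)
next
  case (step a a')
  then obtain p where p: "directed_path G p" "hd p = a'" "last p = b"
    by blast
  then have "p \<noteq> []"
    by (simp add: directed_path_def)
  then show ?case
    using p step(1) by (intro exI[of _ "a # p"]) (simp add: directed_path_Cons)
qed

lemma directed_path_d_connecting:
  assumes "acyclic G" "directed_path G p"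
    and "\<And>i. 0 < i \<Longrightarrow> Suc i < length p \<Longrightarrow> p ! i \<notin> Z"
  shows "d_connecting G Z p"
proof -
  have "p ! i \<noteq> p ! j" if "i < j" "j < length p" for i j
    using directed_path_nth_trancl[OF assms(2) that] assms(1) by (auto simp: acyclic_def)
  then have "distinct p"
    by (metis distinct_conv_nth linorder_neqE_nat)
  moreover have "\<not> collider G p i" if "Suc i < length p" for i
    using assms(1,2) that acyclic_trancl_imp_not_rtrancl[of G "p ! i" "p ! Suc i"]
    by (auto simp: collider_def directed_path_def)
  ultimately show ?thesis
    using assms(2,3) by (auto simp: d_connecting_def is_path_def adjacent_def directed_path_def)
qed

lemma d_separated_singletonsI:
  assumes "\<And>p. d_connecting G Z p \<Longrightarrow> p ! 0 = a \<Longrightarrow> last p = b \<Longrightarrow> False"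
  shows "d_separated G {a} {b} Z"
  using assms d_connectingD(1) by (fastforce simp: d_separated_def hd_conv_nth)

lemma d_connecting_not_d_separated:
  "d_connecting G Z p \<Longrightarrow> hd p \<in> A \<Longrightarrow> last p \<in> B \<Longrightarrow> \<not> d_separated G A B Z"
  by (auto simp: d_separated_def)

text \<open>An open collider would need a node of Z reachable from \<open>p ! 1\<close>, so the path never
  turns back: it is directed from \<open>p ! 1\<close> on.\<close>
lemma d_connecting_out_edge_reaches_last:
  assumes p: "d_connecting G Z p" "Suc 0 < length p"
    and out: "(p ! 0, p ! 1) \<in> G" and unreached: "\<And>z. z \<in> Z \<Longrightarrow> (p ! 1, z) \<notin> G\<^sup>*"
  shows "(p ! 1, last p) \<in> G\<^sup>*"
proof -
  have "(p ! (i - 1), p ! i) \<in> G \<and> (p ! 1, p ! i) \<in> G\<^sup>*" if "0 < i" "i < length p" for i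
    using that
  proof (induction i rule: nat_induct_non_zero)
    case 1
    then show ?case using out by simp
  next
    case (Suc i)
    then have IH: "(p ! (i - 1), p ! i) \<in> G" "(p ! 1, p ! i) \<in> G\<^sup>*"
      by auto
    have "\<not> collider G p i"
    proof
      assume "collider G p i"
      then obtain z where "z \<in> Z" "(p ! i, z) \<in> G\<^sup>*"
        using d_connectingD(4)[OF p(1) Suc.hyps(1) Suc.prems]
        by (auto simp: descendants_def dest: trancl_into_rtrancl)
      then show False
        using unreached IH(2) by (meson rtrancl_trans)
    qed
    then have "(p ! i, p ! Suc i) \<in> G"
      using IH(1) d_connectingD(3)[OF p(1) Suc.prems] by (auto simp: collider_def adjacent_def)
    then show ?case
      using IH(2) by simp
  qed
  from this[of "length p - 1"] p(2) have "(p ! 1, p ! (length p - 1)) \<in> G\<^sup>*"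
    by simp
  moreover have "last p = p ! (length p - 1)"
    using p(2) by (intro last_conv_nth) auto
  ultimately show ?thesis
    by simp
qed

lemma parents_d_separate_nondescendant:
  assumes ac: "acyclic G" and "w \<noteq> Y" "w \<notin> parents G Y" "w \<notin> descendants G Y"
  shows "d_separated G {Y} {w} (parents G Y)"
proof (rule d_separated_singletonsI)
  fix p assume p: "d_connecting G (parents G Y) p" "p ! 0 = Y" "last p = w"
  have len: "Suc 0 < length p"
    using p assms(2) nth_Suc_less_if_not_last[of 0 p] d_connectingD(1)[OF p(1)] by auto
  consider "(p ! 1, Y) \<in> G" | "(Y, p ! 1) \<in> G"
    using d_connectingD(3)[OF p(1) len] p(2) by (auto simp: adjacent_def)
  then show False
  proof cases
    case 1
    then have "p ! 1 \<noteq> last p"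
      using p(3) assms(3) by (auto simp: parents_def)
    then have "Suc 1 < length p"
      using nth_Suc_less_if_not_last[of 1 p] len by simp
    moreover have "\<not> collider G p 1"
      using 1 p(2) acyclic_trancl_imp_not_rtrancl[OF ac, of "p ! 1" Y] by (auto simp: collider_def)
    ultimately show False
      using d_connectingD(5)[OF p(1), of 1] 1 by (simp add: parents_def)
  next
    case 2
    have "(p ! 1, z) \<notin> G\<^sup>*" if "z \<in> parents G Y" for z
    proof
      assume "(p ! 1, z) \<in> G\<^sup>*"
      with 2 have "(Y, z) \<in> G\<^sup>+"
        by (rule rtrancl_into_trancl2)
      moreover have "(z, Y) \<in> G\<^sup>*"
        using that by (auto simp: parents_def)
      ultimately show False
        using acyclic_trancl_imp_not_rtrancl[OF ac] by blast
    qed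
    then have "(p ! 1, w) \<in> G\<^sup>*"
      using d_connecting_out_edge_reaches_last[OF p(1) len] 2 p by simp
    then have "(Y, w) \<in> G\<^sup>+"
      using 2 by (simp add: rtrancl_into_trancl2)
    then show False
      using assms(4) by (simp add: descendants_def)
  qed
qed

definition ancestral_children :: "('v \<times> 'v) set \<Rightarrow> 'v \<Rightarrow> 'v \<Rightarrow> 'v set" where
  "ancestral_children G E Y = ancestors G Y \<inter> children G E"

lemma ancestral_children_with_parents_d_separate:
  fixes G :: "('v \<times> 'v) set" and E Y :: 'v
  defines "A \<equiv> ancestral_children G E Y"
  assumes ac: "acyclic G" and "E \<noteq> Y" "parents G E = {}" "(E, Y) \<notin> G"
  shows "d_separated G {E} {Y} (A \<union> (parents_set G A - {E}))" (is "d_separated G {E} {Y} ?S")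
proof (rule d_separated_singletonsI)
  fix p assume p: "d_connecting G ?S p" "p ! 0 = E" "last p = Y"
  have len: "Suc 0 < length p"
    using p assms(3) nth_Suc_less_if_not_last[of 0 p] d_connectingD(1)[OF p(1)] by auto
  have out: "(E, p ! 1) \<in> G"
    using d_connectingD(3)[OF p(1) len] p(2) assms(4) by (auto simp: adjacent_def parents_def)
  show False
  proof (cases "(p ! 1, Y) \<in> G\<^sup>+")
    case True
    then have A1: "p ! 1 \<in> A"
      using out by (simp add: A_def ancestral_children_def ancestors_def children_def)
    have "p ! 1 \<noteq> Y"
      using True ac by (auto simp: acyclic_def)
    then have "Suc 1 < length p"
      using nth_Suc_less_if_not_last[of 1 p] len p(3) by simp
    then have "collider G p 1"
      using d_connectingD(5)[OF p(1), of 1] A1 by auto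
    then have e21: "(p ! 2, p ! 1) \<in> G"
      by (simp add: collider_def numeral_2_eq_2)
    have "(p ! 2, Y) \<in> G\<^sup>+"
      using e21 True by (rule trancl_into_trancl2)
    then have "p ! 2 \<noteq> Y"
      using ac by (auto simp: acyclic_def)
    then have "Suc 2 < length p"
      using nth_Suc_less_if_not_last[of 2 p] \<open>Suc 1 < length p\<close> p(3) by simp
    have "p ! 2 \<noteq> E"
      using nth_eq_iff_index_eq[OF d_connectingD(2)[OF p(1)], of 2 0] p(2) \<open>Suc 1 < length p\<close>
        d_connectingD(1)[OF p(1)] by simp
    then have "p ! 2 \<in> ?S"
      using A1 e21 by (auto simp: parents_set_def parents_def)
    moreover have "\<not> collider G p 2"
      using e21 acyclic_trancl_imp_not_rtrancl[OF ac, of "p ! 2" "p ! 1"] by (auto simp: collider_def)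
    ultimately show False
      using d_connectingD(5)[OF p(1), of 2] \<open>Suc 2 < length p\<close> by simp
  next
    case False
    have "(z, Y) \<in> G\<^sup>+" if "z \<in> ?S" for z
      using that by (auto simp: A_def ancestral_children_def parents_set_def parents_def ancestors_def)
    then have "(p ! 1, z) \<notin> G\<^sup>*" if "z \<in> ?S" for z
      using False that by (meson rtrancl_trancl_trancl)
    then have "(p ! 1, Y) \<in> G\<^sup>*"
      using d_connecting_out_edge_reaches_last[OF p(1) len] out p by simp
    then show False
      using False out assms(5) by (auto simp: rtrancl_eq_or_trancl)
  qed
qed

lemma not_d_separated_via_coparent:
  assumes ac: "acyclic G" and "E \<noteq> Y" "x \<noteq> E"
    and Ek: "(E, k) \<in> G" and xk: "(x, k) \<in> G" and kY: "(k, Y) \<in> G\<^sup>+" and xY: "(x, Y) \<in> G"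
    and "x \<notin> S"
  shows "\<not> d_separated G {E} {Y} S"
proof (cases "k \<in> S \<or> descendants G k \<inter> S \<noteq> {}")
  case True
  have irrefl: "(a, a) \<notin> G\<^sup>+" for a
    using ac by (simp add: acyclic_def)
  have "distinct [E, k, x, Y]"
    using assms irrefl[of E] irrefl[of k] irrefl[of x] by auto
  then have "is_path G [E, k, x, Y]"
    using Ek xk xY by (auto simp: is_path_def adjacent_def less_Suc_eq)
  moreover have "(Y, x) \<notin> G" "(k, E) \<notin> G"
    using acyclic_trancl_imp_not_rtrancl[OF ac] xY Ek by blast+
  ultimately have "d_connecting G S [E, k, x, Y]"
    using True assms by (auto simp: d_connecting_def collider_def less_Suc_eq)
  then show ?thesis
    by (simp add: d_connecting_not_d_separated)
next
  case False
  obtain q where q: "directed_path G q" "hd q = k" "last q = Y"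
    using trancl_directed_path[OF kY] by blast
  then have "q \<noteq> []"
    by (simp add: directed_path_def)
  have "d_connecting G S (E # q)"
  proof (rule directed_path_d_connecting[OF ac])
    show "directed_path G (E # q)"
      using q Ek \<open>q \<noteq> []\<close> by (simp add: directed_path_Cons)
    fix i assume "0 < i" "Suc i < length (E # q)"
    then have "(E # q) ! i = k \<or> (k, (E # q) ! i) \<in> G\<^sup>+"
      using directed_path_nth_trancl[OF q(1), of 0 "i - 1"] q(2) \<open>q \<noteq> []\<close>
      by (cases "i = 1") (auto simp: hd_conv_nth)
    then show "(E # q) ! i \<notin> S"
      using False by (auto simp: descendants_def)
  qed
  then show ?thesis
    using q \<open>q \<noteq> []\<close> by (simp add: d_connecting_not_d_separated)
qed

lemma not_d_separated_via_child:
  assumes "acyclic G" "(E, x) \<in> G" "(x, Y) \<in> G" "x \<notin> S"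
  shows "\<not> d_separated G {E} {Y} S"
proof -
  have "d_connecting G S [E, x, Y]"
    using assms by (intro directed_path_d_connecting) (auto simp: directed_path_Cons less_Suc_eq)
  then show ?thesis
    by (simp add: d_connecting_not_d_separated)
qed

locale exogenous_environment =
  fixes G :: "('v \<times> 'v) set" and E Y :: 'v and Xs :: "'v set"
    and ci :: "'v set \<Rightarrow> 'v set \<Rightarrow> 'v set \<Rightarrow> bool"
  assumes E_neq_Y: "E \<noteq> Y" and E_notin_Xs: "E \<notin> Xs" and Y_notin_Xs: "Y \<notin> Xs"
    and edges_in_nodes: "G \<subseteq> (insert E (insert Y Xs)) \<times> (insert E (insert Y Xs))"
    and acyclic: "acyclic G"
    and markov_faithful: "markov_faithful G (insert E (insert Y Xs)) ci"
    and E_parentless: "parents G E = {}"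
    and E_not_parent_Y: "E \<notin> parents G Y"
begin

lemma invariant_iff_d_separated:
  assumes "S \<subseteq> Xs"
  shows "S \<in> invariant_sets ci E Y Xs \<longleftrightarrow> d_separated G {E} {Y} S"
proof -
  have "ci {Y} {E} S \<longleftrightarrow> d_separated G {Y} {E} S"
    using markov_faithful assms E_neq_Y E_notin_Xs Y_notin_Xs unfolding markov_faithful_def
    by (elim allE[of _ "{Y}"] allE[of _ "{E}"] allE[of _ S]) auto
  then show ?thesis
    using assms d_separated_sym[of G "{Y}"] by (simp add: invariant_sets_def)
qed

lemma ancestors_Y_subset_Xs: "ancestors G Y - {E} \<subseteq> Xs"
proof
  fix z assume z: "z \<in> ancestors G Y - {E}"
  then have "z \<in> Domain G" "z \<noteq> Y"
    using acyclic by (auto simp: ancestors_def acyclic_def elim: converse_tranclE)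
  then show "z \<in> Xs"
    using z edges_in_nodes by auto
qed

lemma parents_invariant: "parents G Y \<in> invariant_sets ci E Y Xs"
proof -
  have "parents G Y \<subseteq> ancestors G Y - {E}"
    using E_not_parent_Y by (auto simp: parents_def ancestors_def)
  then have in_Xs: "parents G Y \<subseteq> Xs"
    using ancestors_Y_subset_Xs by blast
  have "E \<notin> descendants G Y"
    using E_parentless by (auto simp: descendants_def parents_def elim: tranclE)
  then have "d_separated G {Y} {E} (parents G Y)"
    using parents_d_separate_nondescendant[OF acyclic] E_neq_Y E_not_parent_Y by metis
  then show ?thesis
    using invariant_iff_d_separated[OF in_Xs] d_separated_sym[of G "{E}"] by simp
qed

lemma ancestral_children_with_parents_invariant:
  defines "A \<equiv> ancestral_children G E Y"
  shows "A \<union> (parents_set G A - {E}) \<in> invariant_sets ci E Y Xs"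
proof -
  have "E \<notin> A"
    using acyclic by (auto simp: A_def ancestral_children_def children_def acyclic_def)
  then have "A \<union> (parents_set G A - {E}) \<subseteq> ancestors G Y - {E}"
    by (auto simp: A_def ancestral_children_def ancestors_def parents_set_def parents_def)
  then have in_Xs: "A \<union> (parents_set G A - {E}) \<subseteq> Xs"
    using ancestors_Y_subset_Xs by blast
  have "(E, Y) \<notin> G"
    using E_not_parent_Y by (simp add: parents_def)
  then show ?thesis
    using ancestral_children_with_parents_d_separate[OF acyclic E_neq_Y E_parentless]
      invariant_iff_d_separated[OF in_Xs]
    unfolding A_def by simp
qed

lemma invariant_set_contains:
  assumes "S \<in> invariant_sets ci E Y Xs"
  shows "parents G Y \<inter> (children G E \<union> parents_set G (ancestral_children G E Y)) \<subseteq> S"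
proof
  fix x assume x: "x \<in> parents G Y \<inter> (children G E \<union> parents_set G (ancestral_children G E Y))"
  have "d_separated G {E} {Y} S"
    using assms invariant_iff_d_separated by (auto simp: invariant_sets_def)
  then show "x \<in> S"
    using x E_not_parent_Y not_d_separated_via_child[OF acyclic, of E x Y S]
      not_d_separated_via_coparent[OF acyclic E_neq_Y, of x _ S]
    by (auto simp: ancestral_children_def children_def parents_set_def parents_def ancestors_def)
qed

end

theorem proposition4:
  fixes G :: "('v \<times> 'v) set" and E Y :: 'v and Xs :: "'v set"
    and ci :: "'v set \<Rightarrow> 'v set \<Rightarrow> 'v set \<Rightarrow> bool"
  assumes "finite Xs" and "E \<noteq> Y" and "E \<notin> Xs" and "Y \<notin> Xs"
    and "G \<subseteq> (insert E (insert Y Xs)) \<times> (insert E (insert Y Xs))"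
    and "acyclic G"
    and "markov_faithful G (insert E (insert Y Xs)) ci"
    and "parents G E = {}"
    and "E \<notin> parents G Y"
  shows "S_ICP ci E Y Xs =
           parents G Y \<inter> (children G E \<union> parents_set G (ancestors G Y \<inter> children G E))"
proof -
  interpret exogenous_environment G E Y Xs ci
    using assms(2-9) by unfold_locales
  let ?inv = "invariant_sets ci E Y Xs" and ?A = "ancestral_children G E Y"
  let ?R = "parents G Y \<inter> (children G E \<union> parents_set G ?A)"
  have "\<Inter> ?inv \<subseteq> parents G Y \<inter> (?A \<union> (parents_set G ?A - {E}))"
    using parents_invariant ancestral_children_with_parents_invariant by blast
  also have "\<dots> \<subseteq> ?R"
    by (auto simp: ancestral_children_def)
  finally have "\<Inter> ?inv = ?R"
    using invariant_set_contains by blast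
  then show ?thesis
    using parents_invariant by (auto simp: S_ICP_def ancestral_children_def)
qed

end
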